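(* Let $X$ be a graph with real symmetric Hamiltonian $M$, let $a\neq b$ be vertices, and let $s\in\mathbb{R}\setminus\{-1,0,1\}$. Then perfect state transfer occurs from $\mathbf e_a+s\mathbf e_b$ to $\mathbf e_b+s\mathbf e_a$ at time $\tau$ if and only if perfect state transfer occurs from $\mathbf e_a$ to $\mathbf e_b$ at time $\tau$.
   Context: $U(t)=e^{-\mathrm{i}tM}$. Perfect state transfer from $\mathbf u$ to $\boldsymbol\mu$ (vectors of equal norm) at time $\tau>0$ means $U(\tau)\mathbf u=\eta\boldsymbol\mu$ for some complex $\eta$ with $|\eta|=1$. *)

theory Defs
  imports "HOL-Analysis.Analysis"
begin

definition cmat_pow :: "complex^'n^'n \<Rightarrow> nat \<Rightarrow> complex^'n^'n" where
  "cmat_pow A k = (((**) A) ^^ k) (mat 1)"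

definition cmat_exp :: "complex^'n^'n \<Rightarrow> complex^'n^'n" where
  "cmat_exp A = (\<Sum>k. (1 / fact k) *\<^sub>R cmat_pow A k)"

definition transition :: "real^'n^'n \<Rightarrow> real \<Rightarrow> complex^'n^'n" where
  "transition M t = cmat_exp (\<chi> i j. - \<i> * complex_of_real t * complex_of_real (M $ i $ j))"

definition evec :: "'n::finite \<Rightarrow> complex^'n" where
  "evec a = axis a 1"

definition pst :: "real^'n^'n \<Rightarrow> complex^'n \<Rightarrow> complex^'n \<Rightarrow> real \<Rightarrow> bool" where
  "pst M u \<mu> \<tau> \<longleftrightarrow> \<tau> > 0 \<and> norm u = norm \<mu> \<and>
     (\<exists>\<eta>::complex. cmod \<eta> = 1 \<and> transition M \<tau> *v u = \<eta> *s \<mu>)"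

end

theory Submission
  imports Defs
begin

text \<open>
  Since \<open>M\<close> is real, the entrywise conjugate of \<open>U(t) = e\<^sup>-\<^sup>i\<^sup>t\<^sup>M\<close> is
  \<open>e\<^sup>i\<^sup>t\<^sup>M = U(t)\<^sup>-\<^sup>1\<close>. Hence for real vectors \<open>x, y\<close>,
  \<open>U(\<tau>) x = \<eta> y\<close> implies \<open>U(\<tau>) y = \<eta> x\<close>: perfect state transfer between real
  states is symmetric. So transfer from \<open>x = e\<^sub>a + s e\<^sub>b\<close> to \<open>y = e\<^sub>b + s e\<^sub>a\<close>
  also runs back from \<open>y\<close> to \<open>x\<close>, and since \<open>x - s y = (1 - s\<^sup>2) e\<^sub>a\<close> and
  \<open>y - s x = (1 - s\<^sup>2) e\<^sub>b\<close>, linearity gives \<open>U(\<tau>) e\<^sub>a = \<eta> e\<^sub>b\<close> once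
  \<open>s\<^sup>2 \<noteq> 1\<close>; the converse is linearity alone. The equal-norm conditions match because
  \<open>\<parallel>u + s v\<parallel>\<^sup>2 - \<parallel>v + s u\<parallel>\<^sup>2 = (1 - s\<^sup>2)(\<parallel>u\<parallel>\<^sup>2 - \<parallel>v\<parallel>\<^sup>2)\<close>.

  The identity \<open>e\<^sup>-\<^sup>A e\<^sup>A = 1\<close> is taken from the library's exponential in a Banach
  algebra, of which square matrices are an instance.
\<close>

definition row_norm_sum :: "'a::real_normed_algebra_1^'n::finite^'m \<Rightarrow> 'm \<Rightarrow> real" where
  "row_norm_sum A i = (\<Sum>j\<in>UNIV. norm (A$i$j))"

definition max_row_norm :: "'a::real_normed_algebra_1^'n::finite^'m::finite \<Rightarrow> real" where
  "max_row_norm A = Max (range (row_norm_sum A))"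

lemma row_norm_sum_le_max_row_norm: "row_norm_sum A i \<le> max_row_norm A"
  unfolding max_row_norm_def by (rule Max_ge) auto

lemma max_row_norm_le: "(\<And>i. row_norm_sum A i \<le> c) \<Longrightarrow> max_row_norm A \<le> c"
  unfolding max_row_norm_def by (subst Max_le_iff) auto

lemma max_row_norm_nonneg: "0 \<le> max_row_norm A"
  by (rule order_trans[OF _ row_norm_sum_le_max_row_norm]) (simp add: row_norm_sum_def sum_nonneg)

lemma norm_entry_le_max_row_norm: "norm (A$i$j) \<le> max_row_norm A"
  by (rule order_trans[OF _ row_norm_sum_le_max_row_norm])
     (unfold row_norm_sum_def, rule member_le_sum, auto)

lemma max_row_norm_eq_0_iff: "max_row_norm A = 0 \<longleftrightarrow> A = 0"
proof
  assume "max_row_norm A = 0"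
  then show "A = 0"
    using norm_entry_le_max_row_norm by (metis norm_le_zero_iff vec_eq_iff zero_index)
next
  assume "A = 0"
  then show "max_row_norm A = 0"
    using max_row_norm_le[of A 0] max_row_norm_nonneg[of A] by (simp add: row_norm_sum_def)
qed

lemma max_row_norm_triangle: "max_row_norm (A + B) \<le> max_row_norm A + max_row_norm B"
proof (rule max_row_norm_le)
  fix i
  have "row_norm_sum (A + B) i \<le> row_norm_sum A i + row_norm_sum B i"
    unfolding row_norm_sum_def by (simp add: sum.distrib[symmetric] sum_mono norm_triangle_ineq)
  then show "row_norm_sum (A + B) i \<le> max_row_norm A + max_row_norm B"
    using row_norm_sum_le_max_row_norm[of A i] row_norm_sum_le_max_row_norm[of B i] by linarith
qed

lemma max_row_norm_scaleR: "max_row_norm (r *\<^sub>R A) = \<bar>r\<bar> * max_row_norm A"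
proof -
  have row: "row_norm_sum (r *\<^sub>R A) i = \<bar>r\<bar> * row_norm_sum A i" for i
    unfolding row_norm_sum_def by (simp add: sum_distrib_left)
  have "max_row_norm (r *\<^sub>R A) = Max ((\<lambda>x. \<bar>r\<bar> * x) ` range (row_norm_sum A))"
    unfolding max_row_norm_def by (simp add: row image_image)
  also have "\<dots> = \<bar>r\<bar> * max_row_norm A"
    unfolding max_row_norm_def
    by (rule mono_Max_commute[symmetric]) (auto simp: mono_def mult_left_mono)
  finally show ?thesis .
qed

lemma max_row_norm_mult: "max_row_norm (A ** B) \<le> max_row_norm A * max_row_norm B"
proof (rule max_row_norm_le)
  fix i
  have "row_norm_sum (A ** B) i \<le> (\<Sum>j\<in>UNIV. \<Sum>l\<in>UNIV. norm (A$i$l) * norm (B$l$j))"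
    unfolding row_norm_sum_def matrix_matrix_mult_def
    by (auto intro!: sum_mono order_trans[OF norm_sum] norm_mult_ineq)
  also have "\<dots> = (\<Sum>l\<in>UNIV. norm (A$i$l) * row_norm_sum B l)"
    unfolding row_norm_sum_def by (subst sum.swap) (simp add: sum_distrib_left)
  also have "\<dots> \<le> (\<Sum>l\<in>UNIV. norm (A$i$l) * max_row_norm B)"
    by (intro sum_mono mult_left_mono row_norm_sum_le_max_row_norm) auto
  also have "\<dots> = row_norm_sum A i * max_row_norm B"
    unfolding row_norm_sum_def by (simp add: sum_distrib_right)
  also have "\<dots> \<le> max_row_norm A * max_row_norm B"
    by (intro mult_right_mono row_norm_sum_le_max_row_norm max_row_norm_nonneg)
  finally show "row_norm_sum (A ** B) i \<le> max_row_norm A * max_row_norm B" .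
qed

lemma max_row_norm_mat_1: "max_row_norm (mat 1 :: 'a::real_normed_algebra_1^'n::finite^'n) = 1"
proof -
  have "row_norm_sum (mat 1 :: 'a^'n^'n) i = 1" for i
    unfolding row_norm_sum_def mat_def by (simp add: if_distrib cong: if_cong)
  then show ?thesis by (simp add: max_row_norm_def)
qed

lemma norm_vec_le_sum_norm_nth: "norm (x :: 'a::real_normed_vector^'n::finite) \<le> (\<Sum>i\<in>UNIV. norm (x$i))"
  unfolding norm_vec_def by (rule L2_set_le_sum) simp

lemma norm_le_max_row_norm:
  "norm (A :: 'a::real_normed_algebra_1^'n::finite^'m::finite) \<le> real CARD('m) * max_row_norm A"
proof -
  have "norm A \<le> (\<Sum>i\<in>UNIV. norm (A$i))"
    by (rule norm_vec_le_sum_norm_nth)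
  also have "\<dots> \<le> (\<Sum>i\<in>UNIV. row_norm_sum A i)"
    unfolding row_norm_sum_def by (intro sum_mono norm_vec_le_sum_norm_nth)
  also have "\<dots> \<le> (\<Sum>i\<in>(UNIV::'m set). max_row_norm A)"
    by (intro sum_mono row_norm_sum_le_max_row_norm)
  finally show ?thesis by simp
qed

lemma max_row_norm_le_norm:
  "max_row_norm (A :: 'a::real_normed_algebra_1^'n::finite^'m::finite) \<le> real CARD('n) * norm A"
proof (rule max_row_norm_le)
  fix i
  have "norm (A$i$j) \<le> norm A" for j
    using Finite_Cartesian_Product.norm_nth_le[of "A$i" j] Finite_Cartesian_Product.norm_nth_le[of A i]
    by (rule order_trans)
  then have "row_norm_sum A i \<le> (\<Sum>j\<in>(UNIV::'n set). norm A)"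
    unfolding row_norm_sum_def by (intro sum_mono)
  then show "row_norm_sum A i \<le> real CARD('n) * norm A" by simp
qed

text \<open>The library's (Frobenius) norm on matrices gives the identity norm \<open>\<surd>n\<close>, so it does not
  make them a \<open>real_normed_algebra_1\<close>; the maximum row sum norm does.\<close>

typedef (overloaded) ('a, 'n) sq_matrix = "UNIV :: ('a::real_normed_algebra_1^'n::finite^'n) set"
  by simp

setup_lifting type_definition_sq_matrix

instantiation sq_matrix :: (real_normed_algebra_1, finite) real_normed_algebra_1
begin

lift_definition zero_sq_matrix :: "('a, 'b) sq_matrix" is 0 .
lift_definition one_sq_matrix :: "('a, 'b) sq_matrix" is "mat 1" .
lift_definition plus_sq_matrix :: "('a, 'b) sq_matrix \<Rightarrow> ('a, 'b) sq_matrix \<Rightarrow> ('a, 'b) sq_matrix"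
  is "(+)" .
lift_definition minus_sq_matrix :: "('a, 'b) sq_matrix \<Rightarrow> ('a, 'b) sq_matrix \<Rightarrow> ('a, 'b) sq_matrix"
  is "(-)" .
lift_definition uminus_sq_matrix :: "('a, 'b) sq_matrix \<Rightarrow> ('a, 'b) sq_matrix" is uminus .
lift_definition times_sq_matrix :: "('a, 'b) sq_matrix \<Rightarrow> ('a, 'b) sq_matrix \<Rightarrow> ('a, 'b) sq_matrix"
  is "(**)" .
lift_definition scaleR_sq_matrix :: "real \<Rightarrow> ('a, 'b) sq_matrix \<Rightarrow> ('a, 'b) sq_matrix" is scaleR .
lift_definition norm_sq_matrix :: "('a, 'b) sq_matrix \<Rightarrow> real" is max_row_norm .

definition sgn_sq_matrix :: "('a, 'b) sq_matrix \<Rightarrow> ('a, 'b) sq_matrix" where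
  "sgn_sq_matrix x = inverse (norm x) *\<^sub>R x"

definition dist_sq_matrix :: "('a, 'b) sq_matrix \<Rightarrow> ('a, 'b) sq_matrix \<Rightarrow> real" where
  "dist_sq_matrix x y = norm (x - y)"

definition uniformity_sq_matrix :: "(('a, 'b) sq_matrix \<times> ('a, 'b) sq_matrix) filter" where
  "uniformity_sq_matrix = (INF e\<in>{0<..}. principal {(x, y). dist x y < e})"

definition open_sq_matrix :: "('a, 'b) sq_matrix set \<Rightarrow> bool" where
  "open_sq_matrix U \<longleftrightarrow> (\<forall>x\<in>U. eventually (\<lambda>(x', y). x' = x \<longrightarrow> y \<in> U) uniformity)"

instance
proof
  fix a b c :: "('a, 'b) sq_matrix" and r s :: real
  show "a + b + c = a + (b + c)" by transfer (rule add.assoc)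
  show "a + b = b + a" by transfer (rule add.commute)
  show "0 + a = a" by transfer simp
  show "- a + a = 0" by transfer simp
  show "a - b = a + - b" by transfer simp
  show "r *\<^sub>R (a + b) = r *\<^sub>R a + r *\<^sub>R b" by transfer (rule scaleR_add_right)
  show "(r + s) *\<^sub>R a = r *\<^sub>R a + s *\<^sub>R a" by transfer (rule scaleR_add_left)
  show "r *\<^sub>R s *\<^sub>R a = (r * s) *\<^sub>R a" by transfer simp
  show "1 *\<^sub>R a = a" by transfer simp
  show "a * b * c = a * (b * c)" by transfer (rule matrix_mul_assoc[symmetric])
  show "(a + b) * c = a * c + b * c" by transfer
      (simp add: matrix_matrix_mult_def vec_eq_iff sum.distrib distrib_right)
  show "a * (b + c) = a * b + a * c" by transfer (rule matrix_add_ldistrib)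
  show "1 * a = a" by transfer simp
  show "a * 1 = a" by transfer simp
  show "(0 :: ('a, 'b) sq_matrix) \<noteq> 1" by transfer (simp add: vec_eq_iff mat_def)
  show "r *\<^sub>R a * b = r *\<^sub>R (a * b)" by transfer (simp add: scalar_matrix_assoc)
  show "a * r *\<^sub>R b = r *\<^sub>R (a * b)" by transfer (simp add: matrix_scalar_ac scalar_matrix_assoc)
  show "sgn a = inverse (norm a) *\<^sub>R a" by (simp add: sgn_sq_matrix_def)
  show "dist a b = norm (a - b)" by (simp add: dist_sq_matrix_def)
  show "(uniformity :: (('a, 'b) sq_matrix \<times> _) filter) =
      (INF e\<in>{0<..}. principal {(x, y). dist x y < e})"
    by (simp add: uniformity_sq_matrix_def)
  show "norm a = 0 \<longleftrightarrow> a = 0" by transfer (rule max_row_norm_eq_0_iff)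
  show "norm (a + b) \<le> norm a + norm b" by transfer (rule max_row_norm_triangle)
  show "norm (r *\<^sub>R a) = \<bar>r\<bar> * norm a" by transfer (rule max_row_norm_scaleR)
  show "norm (a * b) \<le> norm a * norm b" by transfer (rule max_row_norm_mult)
  show "norm (1 :: ('a, 'b) sq_matrix) = 1" by transfer (rule max_row_norm_mat_1)
next
  fix U :: "('a, 'b) sq_matrix set"
  show "open U \<longleftrightarrow> (\<forall>x\<in>U. \<forall>\<^sub>F (x', y) in uniformity. x' = x \<longrightarrow> y \<in> U)"
    by (simp add: open_sq_matrix_def)
qed

end

lemma bounded_linear_Rep_sq_matrix:
  "bounded_linear (Rep_sq_matrix :: ('a::real_normed_algebra_1, 'n::finite) sq_matrix \<Rightarrow> _)"
proof (rule bounded_linear_intro[where K = "real CARD('n)"])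
  fix x y :: "('a, 'n) sq_matrix" and r :: real
  show "Rep_sq_matrix (x + y) = Rep_sq_matrix x + Rep_sq_matrix y" by transfer simp
  show "Rep_sq_matrix (r *\<^sub>R x) = r *\<^sub>R Rep_sq_matrix x" by transfer simp
  show "norm (Rep_sq_matrix x) \<le> norm x * real CARD('n)"
    by transfer (metis norm_le_max_row_norm mult.commute)
qed

lemma bounded_linear_Abs_sq_matrix:
  "bounded_linear (Abs_sq_matrix :: 'a::real_normed_algebra_1^'n::finite^'n \<Rightarrow> _)"
proof (rule bounded_linear_intro[where K = "real CARD('n)"])
  fix x y :: "'a^'n^'n" and r :: real
  show "Abs_sq_matrix (x + y) = Abs_sq_matrix x + Abs_sq_matrix y" by (simp add: plus_sq_matrix.abs_eq)
  show "Abs_sq_matrix (r *\<^sub>R x) = r *\<^sub>R Abs_sq_matrix x" by (simp add: scaleR_sq_matrix.abs_eq)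
  show "norm (Abs_sq_matrix x) \<le> norm x * real CARD('n)"
    by (metis norm_sq_matrix.abs_eq max_row_norm_le_norm mult.commute)
qed

instance sq_matrix :: ("{real_normed_algebra_1, banach}", finite) banach
proof
  fix X :: "nat \<Rightarrow> ('a, 'b) sq_matrix"
  assume "Cauchy X"
  then have "Cauchy (\<lambda>k. Rep_sq_matrix (X k))"
    by (rule bounded_linear.Cauchy[OF bounded_linear_Rep_sq_matrix])
  then have "convergent (\<lambda>k. Rep_sq_matrix (X k))"
    by (rule Cauchy_convergent)
  then obtain L where "(\<lambda>k. Rep_sq_matrix (X k)) \<longlonglongrightarrow> L"
    unfolding convergent_def ..
  then have "(\<lambda>k. Abs_sq_matrix (Rep_sq_matrix (X k))) \<longlonglongrightarrow> Abs_sq_matrix L"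
    by (rule bounded_linear.tendsto[OF bounded_linear_Abs_sq_matrix])
  then show "convergent X"
    unfolding Rep_sq_matrix_inverse by (rule convergentI)
qed


lemma cmat_pow_Suc: "cmat_pow A (Suc k) = A ** cmat_pow A k"
  by (simp add: cmat_pow_def)

lemma cmat_pow_0: "cmat_pow A 0 = mat 1"
  by (simp add: cmat_pow_def)

lemma Rep_sq_matrix_power: "Rep_sq_matrix (x ^ k) = cmat_pow (Rep_sq_matrix x) k"
  by (induction k) (simp_all add: cmat_pow_0 cmat_pow_Suc times_sq_matrix.rep_eq one_sq_matrix.rep_eq)

lemma cmat_exp_series_eq:
  "(\<lambda>k. (1 / fact k) *\<^sub>R cmat_pow A k) = (\<lambda>k. Rep_sq_matrix (Abs_sq_matrix A ^ k /\<^sub>R fact k))"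
  by (simp add: scaleR_sq_matrix.rep_eq Rep_sq_matrix_power Abs_sq_matrix_inverse divide_inverse_commute)

lemma summable_cmat_exp_series: "summable (\<lambda>k. (1 / fact k) *\<^sub>R cmat_pow A k)"
  unfolding cmat_exp_series_eq
  by (rule bounded_linear.summable[OF bounded_linear_Rep_sq_matrix summable_exp_generic])

lemma cmat_exp_eq_exp: "cmat_exp A = Rep_sq_matrix (exp (Abs_sq_matrix A))"
  unfolding cmat_exp_def cmat_exp_series_eq exp_def
  by (rule bounded_linear.suminf[OF bounded_linear_Rep_sq_matrix summable_exp_generic, symmetric])

lemma cmat_exp_minus_mult: "cmat_exp (- A) ** cmat_exp A = mat 1"
proof -
  have "exp (- Abs_sq_matrix A) * exp (Abs_sq_matrix A) = 1"
    using exp_minus_inverse[of "- Abs_sq_matrix A"] by simp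
  then have "Rep_sq_matrix (exp (Abs_sq_matrix (- A)) * exp (Abs_sq_matrix A)) = mat 1"
    by (simp add: uminus_sq_matrix.abs_eq one_sq_matrix.rep_eq)
  then show ?thesis
    by (simp add: cmat_exp_eq_exp times_sq_matrix.rep_eq)
qed

lemma bounded_linear_commute_cmat_exp:
  assumes f: "bounded_linear f" and pow: "\<And>k. f (cmat_pow A k) = cmat_pow B k"
  shows "f (cmat_exp A) = cmat_exp B"
proof -
  have "f (cmat_exp A) = (\<Sum>k. f ((1 / fact k) *\<^sub>R cmat_pow A k))"
    unfolding cmat_exp_def by (rule bounded_linear.suminf[OF f summable_cmat_exp_series])
  also have "\<dots> = cmat_exp B"
    unfolding cmat_exp_def by (simp add: linear.scaleR[OF bounded_linear.linear[OF f]] pow)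
  finally show ?thesis .
qed

definition mat_cnj :: "complex^'n^'m \<Rightarrow> complex^'n^'m" where
  "mat_cnj A = (\<chi> i j. cnj (A$i$j))"

definition vec_cnj :: "complex^'n \<Rightarrow> complex^'n" where
  "vec_cnj x = (\<chi> i. cnj (x$i))"

lemma bounded_linear_mat_cnj: "bounded_linear (mat_cnj :: complex^'n::finite^'m::finite \<Rightarrow> _)"
  unfolding linear_conv_bounded_linear[symmetric]
  by (rule linearI) (simp_all add: mat_cnj_def vec_eq_iff)

lemma mat_cnj_mult: "mat_cnj (A ** B) = mat_cnj A ** mat_cnj B"
  by (simp add: mat_cnj_def matrix_matrix_mult_def vec_eq_iff)

lemma mat_cnj_cmat_pow: "mat_cnj (cmat_pow A k) = cmat_pow (mat_cnj A) k"
  by (induction k) (simp_all add: cmat_pow_0 cmat_pow_Suc mat_cnj_mult, simp add: mat_cnj_def mat_def vec_eq_iff)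

lemma mat_cnj_cmat_exp: "mat_cnj (cmat_exp A) = cmat_exp (mat_cnj A)"
  by (rule bounded_linear_commute_cmat_exp[OF bounded_linear_mat_cnj mat_cnj_cmat_pow])

lemma vec_cnj_matrix_vector_mult: "vec_cnj (A *v x) = mat_cnj A *v vec_cnj x"
  by (simp add: vec_eq_iff matrix_vector_mult_def vec_cnj_def mat_cnj_def)

lemma vec_cnj_add [simp]: "vec_cnj (x + y) = vec_cnj x + vec_cnj y"
  by (simp add: vec_eq_iff vec_cnj_def)

lemma vec_cnj_scalar_mult [simp]: "vec_cnj (c *s x) = cnj c *s vec_cnj x"
  by (simp add: vec_eq_iff vec_cnj_def)

lemma vec_cnj_evec: "vec_cnj (evec a) = evec a"
  by (simp add: vec_eq_iff vec_cnj_def evec_def axis_def)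

lemma mat_cnj_transition_mult: "mat_cnj (transition M t) ** transition M t = mat 1"
proof -
  define H where "H = (\<chi> i j. - \<i> * complex_of_real t * complex_of_real (M $ i $ j))"
  have U: "transition M t = cmat_exp H"
    by (simp only: transition_def H_def)
  have "mat_cnj H = - H"
    by (simp add: H_def mat_cnj_def vec_eq_iff)
  then have "mat_cnj (transition M t) = cmat_exp (- H)"
    by (simp add: U mat_cnj_cmat_exp)
  then show ?thesis
    by (simp add: U cmat_exp_minus_mult)
qed

lemma transition_swap_real:
  assumes u: "vec_cnj u = u" and v: "vec_cnj v = v" and \<eta>: "cmod \<eta> = 1"
    and transfer: "transition M t *v u = \<eta> *s v"
  shows "transition M t *v v = \<eta> *s u"
proof -
  let ?U = "transition M t"
  have "u = mat_cnj ?U *v (?U *v u)"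
    by (simp add: matrix_vector_mul_assoc mat_cnj_transition_mult)
  also have "\<dots> = \<eta> *s (mat_cnj ?U *v v)"
    by (simp add: transfer vector_scalar_commute)
  finally have "cnj \<eta> *s u = (cnj \<eta> * \<eta>) *s (mat_cnj ?U *v v)"
    by (simp add: vector_smult_assoc)
  also have "cnj \<eta> * \<eta> = 1"
    using \<eta> by (simp add: complex_norm_square[symmetric] mult.commute)
  finally have "vec_cnj (cnj \<eta> *s u) = vec_cnj (mat_cnj ?U *v v)"
    by simp
  then show ?thesis
    by (simp add: vec_cnj_matrix_vector_mult mat_cnj_def u v vec_eq_iff)
qed

lemma norm_add_scaleR_swap_eq_iff:
  fixes u v :: "'a::real_inner"
  assumes "s\<^sup>2 \<noteq> 1"
  shows "norm (u + s *\<^sub>R v) = norm (v + s *\<^sub>R u) \<longleftrightarrow> norm u = norm v"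
proof -
  have square: "(norm (x + s *\<^sub>R y))\<^sup>2 = (norm x)\<^sup>2 + 2 * s * inner x y + s\<^sup>2 * (norm y)\<^sup>2"
    for x y :: 'a
    unfolding power2_norm_eq_inner
    by (simp add: inner_add_left inner_add_right inner_commute[of y x] algebra_simps power2_eq_square)
  have diff: "(norm (u + s *\<^sub>R v))\<^sup>2 - (norm (v + s *\<^sub>R u))\<^sup>2 = (1 - s\<^sup>2) * ((norm u)\<^sup>2 - (norm v)\<^sup>2)"
    unfolding square by (simp add: inner_commute[of v u] algebra_simps)
  have "norm (u + s *\<^sub>R v) = norm (v + s *\<^sub>R u) \<longleftrightarrow> (norm (u + s *\<^sub>R v))\<^sup>2 = (norm (v + s *\<^sub>R u))\<^sup>2"
    by simp
  also have "\<dots> \<longleftrightarrow> (1 - s\<^sup>2) * ((norm u)\<^sup>2 - (norm v)\<^sup>2) = 0"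
    by (simp only: eq_iff_diff_eq_0[of "(norm (u + s *\<^sub>R v))\<^sup>2"] diff)
  also have "\<dots> \<longleftrightarrow> norm u = norm v"
    using assms by simp
  finally show ?thesis .
qed

lemma of_real_scalar_mult_eq_scaleR: "complex_of_real s *s x = s *\<^sub>R x"
  by (simp add: vec_eq_iff) (simp add: scaleR_conv_of_real)

lemma pst_real_combination_iff:
  fixes u v :: "complex^'n::finite"
  assumes u: "vec_cnj u = u" and v: "vec_cnj v = v" and s: "s\<^sup>2 \<noteq> 1"
  shows "pst M (u + complex_of_real s *s v) (v + complex_of_real s *s u) \<tau> \<longleftrightarrow> pst M u v \<tau>"
proof -
  let ?U = "transition M \<tau>" and ?S = "complex_of_real s"
  let ?x = "u + ?S *s v" and ?y = "v + ?S *s u"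
  have real: "vec_cnj ?x = ?x" "vec_cnj ?y = ?y"
    using u v by simp_all
  have "?S\<^sup>2 \<noteq> 1"
    using s by (metis of_real_eq_1_iff of_real_power)
  then have S: "1 - ?S\<^sup>2 \<noteq> 0"
    by simp
  have transfer_iff: "(\<exists>\<eta>. cmod \<eta> = 1 \<and> ?U *v ?x = \<eta> *s ?y) \<longleftrightarrow>
      (\<exists>\<eta>. cmod \<eta> = 1 \<and> ?U *v u = \<eta> *s v)"
  proof (intro iffI; elim exE conjE)
    fix \<eta> assume \<eta>: "cmod \<eta> = 1" and xy: "?U *v ?x = \<eta> *s ?y"
    have yx: "?U *v ?y = \<eta> *s ?x"
      by (rule transition_swap_real[OF real \<eta> xy])
    have "(1 - ?S\<^sup>2) *s (?U *v u) = ?U *v (?x - ?S *s ?y)"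
      by (simp add: vector_scalar_commute algebra_simps power2_eq_square vector_smult_assoc)
    also have "\<dots> = (1 - ?S\<^sup>2) *s (\<eta> *s v)"
      unfolding matrix_vector_mult_diff_distrib vector_scalar_commute xy yx
      by (simp add: algebra_simps power2_eq_square vector_smult_assoc)
    finally have "?U *v u = \<eta> *s v"
      using S by (simp only: vector_mul_lcancel) simp
    then show "\<exists>\<eta>. cmod \<eta> = 1 \<and> ?U *v u = \<eta> *s v"
      using \<eta> by blast
  next
    fix \<eta> assume \<eta>: "cmod \<eta> = 1" and uv: "?U *v u = \<eta> *s v"
    have vu: "?U *v v = \<eta> *s u"
      by (rule transition_swap_real[OF u v \<eta> uv])
    have "?U *v ?x = \<eta> *s ?y"
      by (simp add: uv vu vector_scalar_commute algebra_simps vector_smult_assoc)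
    then show "\<exists>\<eta>. cmod \<eta> = 1 \<and> ?U *v ?x = \<eta> *s ?y"
      using \<eta> by auto
  qed
  have norm_iff: "norm ?x = norm ?y \<longleftrightarrow> norm u = norm v"
    unfolding of_real_scalar_mult_eq_scaleR by (rule norm_add_scaleR_swap_eq_iff[OF s])
  show ?thesis
    unfolding pst_def norm_iff transfer_iff ..
qed

theorem mainTheorem6:
  fixes M :: "real^'n^'n" and a b :: 'n and s \<tau> :: real
  assumes "transpose M = M"
    and "a \<noteq> b"
    and "s \<notin> {-1, 0, 1}"
  shows "pst M (evec a + complex_of_real s *s evec b) (evec b + complex_of_real s *s evec a) \<tau>
     \<longleftrightarrow> pst M (evec a) (evec b) \<tau>"
proof -
  have "s\<^sup>2 \<noteq> 1"
    using assms(3) by (auto simp: power2_eq_1_iff)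
  then show ?thesis
    by (rule pst_real_combination_iff[OF vec_cnj_evec vec_cnj_evec])
qed

end
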